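(* For every $a\in C\ell_{1,2}$, $\det(L(a))=\det(R(a))=(N(a)^2+4T(a)^2)^2=P(a)^2$.
   Context: $C\ell_{1,2}$ is the real Clifford algebra generated by $i_1,i_2,i_3$ with $i_1^2=1$, $i_2^2=i_3^2=-1$ and $i_ti_m=-i_mi_t$ for $t\neq m$, with real basis $e_0=1$, $e_1=i_1$, $e_2=i_2$, $e_3=i_1i_2$, $e_4=i_3$, $e_5=i_1i_3$, $e_6=i_2i_3$, $e_7=i_1i_2i_3$. For $x=\sum_{t=0}^7x_te_t$ write $\overrightarrow{x}=(x_0,\dots,x_7)^T\in\mathbb{R}^8$. For $a\in C\ell_{1,2}$, $L(a)$ and $R(a)$ are the real $8\times8$ matrices with $\overrightarrow{ax}=L(a)\overrightarrow{x}$ and $\overrightarrow{xa}=R(a)\overrightarrow{x}$ for all $x$. For $a=\sum a_te_t$: $N(a)=a_0^2-a_1^2+a_2^2-a_3^2+a_4^2-a_5^2+a_6^2-a_7^2$, $T(a)=a_0a_7+a_2a_5-a_1a_6-a_3a_4$, $P(a)=N(a)^2+4T(a)^2$. *)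

theory Defs
  imports "HOL-Analysis.Analysis" "HOL-Library.Numeral_Type"
begin

text \<open>Elements of Cl_{1,2} are identified with their coordinate vectors in R^8
  w.r.t. the basis e_0,...,e_7. The basis element e_t corresponds to the bitmask t:
  bit 0 = i1, bit 1 = i2, bit 2 = i3 (so e_3 = i1 i2, e_5 = i1 i3, e_6 = i2 i3, e_7 = i1 i2 i3).\<close>

type_synonym cl12 = "real ^ 8"

definition coord :: "cl12 \<Rightarrow> nat \<Rightarrow> real" where
  "coord x t = x $ (of_nat t :: 8)"

definition gen_sq :: "nat \<Rightarrow> real" where
  "gen_sq b = (if b = 0 then 1 else -1)"

text \<open>Sign of the product of basis blades e_A e_B = blade_sign A B * e_(A xor B):
  anticommutation swaps plus squares of common generators.\<close>
definition blade_sign :: "nat \<Rightarrow> nat \<Rightarrow> real" where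
  "blade_sign A B =
     (-1) ^ card {(a, b). a < 3 \<and> b < 3 \<and> bit A a \<and> bit B b \<and> b < a}
     * (\<Prod>b\<in>{b. b < 3 \<and> bit A b \<and> bit B b}. gen_sq b)"

definition basis_cl :: "nat \<Rightarrow> cl12" where
  "basis_cl t = (\<chi> k. if k = (of_nat t :: 8) then 1 else 0)"

definition clmul :: "cl12 \<Rightarrow> cl12 \<Rightarrow> cl12" where
  "clmul x y = (\<Sum>i<8. \<Sum>j<8. (coord x i * coord y j * blade_sign i j) *\<^sub>R basis_cl (xor i j))"

definition Lmat :: "cl12 \<Rightarrow> real ^ 8 ^ 8" where
  "Lmat a = matrix (\<lambda>x. clmul a x)"

definition Rmat :: "cl12 \<Rightarrow> real ^ 8 ^ 8" where
  "Rmat a = matrix (\<lambda>x. clmul x a)"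

definition Nf :: "cl12 \<Rightarrow> real" where
  "Nf a = (coord a 0)^2 - (coord a 1)^2 + (coord a 2)^2 - (coord a 3)^2
         + (coord a 4)^2 - (coord a 5)^2 + (coord a 6)^2 - (coord a 7)^2"

definition Tf :: "cl12 \<Rightarrow> real" where
  "Tf a = coord a 0 * coord a 7 + coord a 2 * coord a 5 - coord a 1 * coord a 6 - coord a 3 * coord a 4"

definition Pf :: "cl12 \<Rightarrow> real" where
  "Pf a = (Nf a)^2 + 4 * (Tf a)^2"

end

(*
  Since e7 = i1 i2 i3 is central with e7^2 = -1, Cl_{1,2} is an algebra over C = R + R e7, in fact
  the algebra of complex 2x2 matrices. With the idempotent p = (1 + e1)/2 one has
  Cl_{1,2} = Cl_{1,2} p + Cl_{1,2} p e2, and left multiplication by a acts on both summands, in the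
  complex bases (p, e2 p) and (p e2, e2 p e2), by the same complex 2x2 matrix M(a). Hence
  det L(a) = |det M(a)|^4, and |det M(a)|^2 = N(a)^2 + 4 T(a)^2 = P(a). Right multiplication by a
  is conjugate, via the reversion anti-automorphism, to left multiplication by the reversion of a,
  which only changes the sign of T.
*)
theory Submission
  imports Defs "Jordan_Normal_Form.Determinant"
begin

hide_const (open) Determinant.det
no_notation Matrix.vec_index (infixl "$" 100)

lemma det_cart_eq_det_mat:
  fixes A :: "'a::comm_ring_1^'n^'n"
  assumes h: "bij_betw h {0..<n} UNIV"
  shows "det A = Determinant.det (Matrix.mat n n (\<lambda>(i, j). A $ h i $ h j))"
proof -
  define g where "g = inv_into {0..<n} h"
  have g: "bij_betw g UNIV {0..<n}"
    unfolding g_def using h by (rule bij_betw_inv_into)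
  have h_g [simp]: "h (g i) = i" for i
    unfolding g_def using h by (simp add: bij_betw_inv_into_right)
  have g_h [simp]: "g (h k) = k" if "k < n" for k
    unfolding g_def using h that by (simp add: bij_betw_inv_into_left)
  have "(\<Sum>p | p permutes (UNIV :: 'n set). of_int (sign p) * (\<Prod>i\<in>UNIV. A $ i $ p i))
      = (\<Sum>q | q permutes {0..<n}. of_int (sign q) * (\<Prod>k=0..<n. A $ h k $ h (q k)))"
  proof (rule sum.reindex_bij_witness[where j = "map_permutation UNIV g"
                                        and i = "map_permutation {0..<n} h"])
    fix p :: "'n \<Rightarrow> 'n" assume "p \<in> {p. p permutes UNIV}"
    then have p: "p permutes UNIV" by simp
    show "map_permutation {0..<n} h (map_permutation UNIV g p) = p"
      using p g by (auto intro!: map_permutation_compose_inv)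
    show "map_permutation UNIV g p \<in> {q. q permutes {0..<n}}"
      using p g by (auto intro!: map_permutation_permutes)
    let ?q = "map_permutation UNIV g p"
    have "h (?q k) = p (h k)" if "k < n" for k
      using map_permutation_apply[of g UNIV "h k" p] g that
      by (simp add: bij_betw_def)
    then have "(\<Prod>k=0..<n. A $ h k $ h (?q k)) = (\<Prod>k=0..<n. A $ h k $ p (h k))"
      by (intro prod.cong) auto
    also have "\<dots> = (\<Prod>i\<in>UNIV. A $ i $ p i)"
      using h by (rule prod.reindex_bij_betw)
    finally show "of_int (sign ?q) * (\<Prod>k=0..<n. A $ h k $ h (?q k))
        = of_int (sign p) * (\<Prod>i\<in>UNIV. A $ i $ p i)"
      using sign_map_permutation[of g UNIV p] g p by (simp add: bij_betw_def)
  next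
    fix q assume "q \<in> {q. q permutes {0..<n}}"
    then have q: "q permutes {0..<n}" by simp
    show "map_permutation UNIV g (map_permutation {0..<n} h q) = q"
      using q h by (auto intro!: map_permutation_compose_inv)
    show "map_permutation {0..<n} h q \<in> {p. p permutes UNIV}"
      using q h by (auto intro!: map_permutation_permutes)
  qed
  also have "\<dots> = Determinant.det (Matrix.mat n n (\<lambda>(i, j). A $ h i $ h j))"
    unfolding Determinant.det_def by (auto intro!: sum.cong prod.cong simp: permutes_in_image)
  finally show ?thesis
    unfolding Determinants.det_def .
qed

definition complex_block :: "complex \<Rightarrow> real mat" where
  "complex_block z = Matrix.mat 2 2 (\<lambda>(i, j). if i = j then Re z else if i = 0 then - Im z else Im z)"

lemma complex_block_carrier [simp]: "complex_block z \<in> carrier_mat 2 2"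
  by (simp add: complex_block_def)

lemma complex_block_mult: "complex_block z * complex_block w = complex_block (z * w)"
proof (rule eq_matI)
  fix i j assume "i < dim_row (complex_block (z * w))" "j < dim_col (complex_block (z * w))"
  then have "i < 2" "j < 2" by (simp_all add: complex_block_def)
  then show "(complex_block z * complex_block w) $$ (i, j) = complex_block (z * w) $$ (i, j)"
    by (auto simp: less_Suc_eq numeral_eq_Suc complex_block_def scalar_prod_def)
qed (simp_all add: complex_block_def)

lemma complex_block_diff: "complex_block z - complex_block w = complex_block (z - w)"
  by (rule eq_matI) (auto simp: complex_block_def)

lemma det_complex_block: "Determinant.det (complex_block z) = (cmod z)\<^sup>2"
proof -
  have minor_0: "mat_delete (complex_block z) 0 0 = Matrix.mat 1 1 (\<lambda>_. Re z)"
    by (rule eq_matI) (auto simp: mat_delete_def complex_block_def)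
  have minor_1: "mat_delete (complex_block z) 1 0 = Matrix.mat 1 1 (\<lambda>_. - Im z)"
    by (rule eq_matI) (auto simp: mat_delete_def complex_block_def)
  have entries: "complex_block z $$ (0, 0) = Re z" "complex_block z $$ (1, 0) = Im z"
    by (simp_all add: complex_block_def)
  have "Determinant.det (complex_block z) = (\<Sum>i<2. complex_block z $$ (i, 0) * cofactor (complex_block z) i 0)"
    by (rule laplace_expansion_column[OF complex_block_carrier]) simp
  also have "\<dots> = complex_block z $$ (0, 0) * cofactor (complex_block z) 0 0
      + complex_block z $$ (1, 0) * cofactor (complex_block z) 1 0"
    by (simp add: eval_nat_numeral)
  also have "\<dots> = (Re z)\<^sup>2 + (Im z)\<^sup>2"
    unfolding cofactor_def minor_0 minor_1 entries by (simp add: det_single power2_eq_square)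
  finally show ?thesis by (simp add: cmod_power2)
qed

lemma det_four_block_complex_block:
  "Determinant.det (four_block_mat (complex_block z1) (complex_block z2) (complex_block z3) (complex_block z4))
     = (cmod (z1 * z4 - z2 * z3))\<^sup>2"
proof -
  have "complex_block z3 * complex_block z4 = complex_block z4 * complex_block z3"
    by (simp add: complex_block_mult mult.commute)
  then have "Determinant.det (four_block_mat (complex_block z1) (complex_block z2) (complex_block z3) (complex_block z4))
      = Determinant.det (complex_block z1 * complex_block z4 - complex_block z2 * complex_block z3)"
    by (intro det_four_block_mat[where n = 2]) simp_all
  then show ?thesis by (simp add: complex_block_mult complex_block_diff det_complex_block)
qed

lemma less_8_cases:
  "(n::nat) < 8 \<Longrightarrow> n = 0 \<or> n = 1 \<or> n = 2 \<or> n = 3 \<or> n = 4 \<or> n = 5 \<or> n = 6 \<or> n = 7"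
  by auto

lemma forall_less_8:
  "(\<forall>i<8. P i) \<longleftrightarrow> P 0 \<and> P 1 \<and> P 2 \<and> P 3 \<and> P 4 \<and> P 5 \<and> P 6 \<and> P (7::nat)"
  by (auto dest!: less_8_cases)

lemma sum_less_8: "(\<Sum>k\<in>{0..<8::nat}. f k) = f 0 + f 1 + f 2 + f 3 + f 4 + f 5 + f 6 + f 7"
  by (simp add: eval_nat_numeral)

lemma bij_betw_of_nat_8: "bij_betw (of_nat :: nat \<Rightarrow> 8) {0..<8} UNIV"
proof -
  have inj: "inj_on (of_nat :: nat \<Rightarrow> 8) {0..<8}"
    by (auto simp: inj_on_def dest!: less_8_cases)
  then have "card ((of_nat :: nat \<Rightarrow> 8) ` {0..<8}) = CARD(8)"
    by (simp add: card_image)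
  then have "(of_nat :: nat \<Rightarrow> 8) ` {0..<8} = UNIV"
    by (intro card_subset_eq) auto
  with inj show ?thesis by (simp add: bij_betw_def)
qed

lemma of_nat_8_eq_iff: "i < 8 \<Longrightarrow> j < 8 \<Longrightarrow> (of_nat i :: 8) = of_nat j \<longleftrightarrow> i = j"
  using bij_betw_of_nat_8 by (auto simp: bij_betw_def inj_on_def)

lemma eq_mat_8I:
  assumes "dim_row A = 8" "dim_col A = 8" "dim_row B = 8" "dim_col B = 8"
    and "\<forall>i<8. \<forall>j<8. A $$ (i, j) = B $$ (i, j)"
  shows "A = B"
  using assms by (intro eq_matI) auto

lemma index_mult_mat_8:
  assumes "i < dim_row A" "j < dim_col B" "dim_col A = 8" "dim_row B = 8"
  shows "(A * B) $$ (i, j) =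
    A $$ (i, 0) * B $$ (0, j) + A $$ (i, 1) * B $$ (1, j) + A $$ (i, 2) * B $$ (2, j)
    + A $$ (i, 3) * B $$ (3, j) + A $$ (i, 4) * B $$ (4, j) + A $$ (i, 5) * B $$ (5, j)
    + A $$ (i, 6) * B $$ (6, j) + A $$ (i, 7) * B $$ (7, j)"
  using assms by (simp add: scalar_prod_def sum_less_8)

(* Block determinant formulas exist only for Jordan_Normal_Form matrices, so L(a) and R(a) are
   transported there. *)
definition mat_of_cart :: "real^8^8 \<Rightarrow> real mat" where
  "mat_of_cart A = Matrix.mat 8 8 (\<lambda>(i, j). A $ of_nat i $ of_nat j)"

lemma mat_of_cart_carrier [simp]: "mat_of_cart A \<in> carrier_mat 8 8"
  by (simp add: mat_of_cart_def)

lemma dim_mat_of_cart [simp]: "dim_row (mat_of_cart A) = 8" "dim_col (mat_of_cart A) = 8"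
  by (simp_all add: mat_of_cart_def)

lemma det_mat_of_cart: "det A = Determinant.det (mat_of_cart A)"
  unfolding mat_of_cart_def by (rule det_cart_eq_det_mat[OF bij_betw_of_nat_8])

lemma xor_less_8: "i < 8 \<Longrightarrow> j < 8 \<Longrightarrow> xor i j < (8::nat)"
  by (auto dest!: less_8_cases)

lemma xor_eq_iff: "xor i j = (k::nat) \<longleftrightarrow> i = xor k j"
  by (metis xor.assoc xor_self_eq xor.right_neutral)

lemma basis_cl_eq_axis: "basis_cl t = axis (of_nat t) 1"
  by (simp add: basis_cl_def axis_def vec_eq_iff)

lemma coord_basis_cl: "s < 8 \<Longrightarrow> t < 8 \<Longrightarrow> coord (basis_cl s) t = (if s = t then 1 else 0)"
  by (auto simp: coord_def basis_cl_def of_nat_8_eq_iff)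

lemma coord_clmul:
  assumes "t < 8"
  shows "coord (clmul x y) t = (\<Sum>j<8. coord x (xor t j) * coord y j * blade_sign (xor t j) j)"
proof -
  have "coord (clmul x y) t
      = (\<Sum>j<8. \<Sum>i<8. coord x i * coord y j * blade_sign i j * coord (basis_cl (xor i j)) t)"
    unfolding clmul_def coord_def by (subst sum.swap) (simp add: sum_distrib_right)
  also have "\<dots> = (\<Sum>j<8. \<Sum>i<8. if i = xor t j then coord x i * coord y j * blade_sign i j else 0)"
    using assms by (intro sum.cong refl) (auto simp: coord_basis_cl xor_less_8 xor_eq_iff)
  also have "\<dots> = (\<Sum>j<8. coord x (xor t j) * coord y j * blade_sign (xor t j) j)"
    using assms by (intro sum.cong refl) (simp add: xor_less_8)
  finally show ?thesis .
qed

lemma index_mat_of_cart_Lmat: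
  assumes "i < 8" "j < 8"
  shows "mat_of_cart (Lmat a) $$ (i, j) = coord a (xor i j) * blade_sign (xor i j) j"
proof -
  have "mat_of_cart (Lmat a) $$ (i, j) = coord (clmul a (basis_cl j)) i"
    using assms by (simp add: mat_of_cart_def Lmat_def matrix_def coord_def basis_cl_eq_axis)
  also have "\<dots> = (\<Sum>l<8. coord a (xor i l) * coord (basis_cl j) l * blade_sign (xor i l) l)"
    using assms(1) by (rule coord_clmul)
  also have "\<dots> = (\<Sum>l<8. if l = j then coord a (xor i l) * blade_sign (xor i l) l else 0)"
    using assms by (intro sum.cong refl) (simp add: coord_basis_cl)
  finally show ?thesis using assms by simp
qed

lemma index_mat_of_cart_Rmat:
  assumes "i < 8" "j < 8"
  shows "mat_of_cart (Rmat a) $$ (i, j) = coord a (xor i j) * blade_sign j (xor i j)"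
proof -
  have "mat_of_cart (Rmat a) $$ (i, j) = coord (clmul (basis_cl j) a) i"
    using assms by (simp add: mat_of_cart_def Rmat_def matrix_def coord_def basis_cl_eq_axis)
  also have "\<dots> = (\<Sum>l<8. coord (basis_cl j) (xor i l) * coord a l * blade_sign (xor i l) l)"
    using assms(1) by (rule coord_clmul)
  also have "\<dots> = (\<Sum>l<8. if l = xor i j then coord a l * blade_sign j l else 0)"
  proof (intro sum.cong refl)
    fix l :: nat assume "l \<in> {..<8}"
    moreover have "j = xor i l \<longleftrightarrow> l = xor i j"
      by (metis xor_eq_iff xor.commute)
    ultimately show "coord (basis_cl j) (xor i l) * coord a l * blade_sign (xor i l) l
        = (if l = xor i j then coord a l * blade_sign j l else 0)"
      using assms by (auto simp: coord_basis_cl xor_less_8)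
  qed
  finally show ?thesis using assms by (simp add: xor_less_8)
qed

lemma less_3_iff: "(a::nat) < 3 \<longleftrightarrow> a = 0 \<or> a = 1 \<or> a = 2"
  by auto

lemma pairs_less_3:
  "{(a::nat, b::nat). a < 3 \<and> b < 3 \<and> P a b}
     = set (filter (\<lambda>(a, b). P a b) [(0,0),(0,1),(0,2),(1,0),(1,1),(1,2),(2,0),(2,1),(2,2)])"
  by (auto simp: less_3_iff intro!: Nat.gr0I)

lemma set_less_3: "{b::nat. b < 3 \<and> P b} = set (filter P [0, 1, 2])"
  by (auto simp: less_3_iff intro!: Nat.gr0I)

lemma blade_sign_table:
  assumes "i < 8" "j < 8"
  shows "blade_sign i j =
    [[1, 1, 1, 1, 1, 1, 1, 1], [1, 1, 1, 1, 1, 1, 1, 1],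
     [1, -1, -1, 1, 1, -1, -1, 1], [1, -1, -1, 1, 1, -1, -1, 1],
     [1, -1, -1, 1, -1, 1, 1, -1], [1, -1, -1, 1, -1, 1, 1, -1],
     [1, 1, 1, 1, -1, -1, -1, -1], [1, 1, 1, 1, -1, -1, -1, -1]] ! i ! j"
  using less_8_cases[OF assms(1)] less_8_cases[OF assms(2)]
  by (elim disjE) (simp_all add: blade_sign_def pairs_less_3 set_less_3 gen_sq_def bit_iff_odd)

(* Reversing a product of k distinct generators takes k choose 2 transpositions. *)
definition reversion_sign :: "nat \<Rightarrow> real" where
  "reversion_sign t = (-1) ^ (card {b. b < 3 \<and> bit t b} choose 2)"

definition reversion :: "cl12 \<Rightarrow> cl12" where
  "reversion x = (\<Sum>t<8. (reversion_sign t * coord x t) *\<^sub>R basis_cl t)"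

lemma reversion_sign_table: "t < 8 \<Longrightarrow> reversion_sign t = [1, 1, 1, -1, 1, -1, -1, -1] ! t"
  by (auto dest!: less_8_cases simp: reversion_sign_def set_less_3 bit_iff_odd choose_two)

lemma reversion_sign_square: "t < 8 \<Longrightarrow> reversion_sign t * reversion_sign t = 1"
  by (auto dest!: less_8_cases simp: reversion_sign_table)

(* Reversion is an anti-automorphism on blades: rev (e_i e_j) = rev e_j rev e_i. *)
lemma blade_sign_reversion:
  assumes "i < 8" "j < 8"
  shows "reversion_sign (xor i j) * blade_sign i j = reversion_sign i * reversion_sign j * blade_sign j i"
  using less_8_cases[OF assms(1)] less_8_cases[OF assms(2)]
  by (elim disjE) (simp_all add: reversion_sign_table blade_sign_table)

lemma coord_reversion:
  assumes "t < 8"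
  shows "coord (reversion x) t = reversion_sign t * coord x t"
proof -
  have "coord (reversion x) t = (\<Sum>s<8. reversion_sign s * coord x s * coord (basis_cl s) t)"
    by (simp add: reversion_def coord_def)
  also have "\<dots> = (\<Sum>s<8. if s = t then reversion_sign s * coord x s else 0)"
    using assms by (intro sum.cong refl) (simp add: coord_basis_cl)
  finally show ?thesis using assms by simp
qed

lemma Pf_reversion: "Pf (reversion a) = Pf a"
  by (simp add: Pf_def Nf_def Tf_def coord_reversion reversion_sign_table power2_eq_square algebra_simps)

(* The realification of M(a): the matrix of left multiplication by a on Cl_{1,2} p in the basis
   p, e7 p, e2 p, e7 e2 p. *)
definition left_block :: "cl12 \<Rightarrow> real mat" where
  "left_block a = four_block_mat
     (complex_block (Complex (coord a 0 + coord a 1) (coord a 6 + coord a 7)))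
     (complex_block (Complex (- coord a 2 - coord a 3) (- coord a 4 - coord a 5)))
     (complex_block (Complex (coord a 2 - coord a 3) (coord a 5 - coord a 4)))
     (complex_block (Complex (coord a 0 - coord a 1) (coord a 7 - coord a 6)))"

lemma left_block_carrier: "left_block a \<in> carrier_mat 4 4"
  using four_block_carrier_mat[OF complex_block_carrier complex_block_carrier]
  by (simp add: left_block_def)

lemma det_left_block: "Determinant.det (left_block a) = Pf a"
  unfolding left_block_def det_four_block_complex_block cmod_power2 Pf_def Nf_def Tf_def
  by (simp only: times_complex.sel minus_complex.sel complex.sel) (simp add: algebra_simps power2_eq_square)

(* Columns: coordinates of 2p, 2 e7 p, 2 e2 p, 2 e7 e2 p and of their right multiples by e2. *)
definition ideal_basis :: "real mat" where
  "ideal_basis = Matrix.mat 8 8 (\<lambda>(i, j).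
     [[1, 0, 0, 0, 0, 0, -1, 0], [1, 0, 0, 0, 0, 0, 1, 0],
      [0, 0, 1, 0, 1, 0, 0, 0], [0, 0, -1, 0, 1, 0, 0, 0],
      [0, 0, 0, -1, 0, 1, 0, 0], [0, 0, 0, 1, 0, 1, 0, 0],
      [0, 1, 0, 0, 0, 0, 0, 1], [0, 1, 0, 0, 0, 0, 0, -1]] ! i ! j)"

lemma ideal_basis_carrier: "ideal_basis \<in> carrier_mat 8 8"
  by (simp add: ideal_basis_def)

lemma dim_ideal_basis [simp]: "dim_row ideal_basis = 8" "dim_col ideal_basis = 8"
  by (simp_all add: ideal_basis_def)

lemma ideal_basis_orthogonal: "transpose_mat ideal_basis * ideal_basis = 2 \<cdot>\<^sub>m 1\<^sub>m 8"
  by (rule eq_mat_8I)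
     (simp_all add: forall_less_8 index_mult_mat_8 ideal_basis_def del: index_mult_mat(1))

lemma det_ideal_basis_nonzero: "Determinant.det ideal_basis \<noteq> 0"
proof -
  have "Determinant.det ideal_basis * Determinant.det ideal_basis = 2 ^ 8"
    using det_mult[of "transpose_mat ideal_basis" 8 ideal_basis] ideal_basis_orthogonal
    by (simp add: ideal_basis_carrier det_transpose[OF ideal_basis_carrier])
  then show ?thesis by auto
qed

lemma mat_of_cart_Lmat_ideal_basis:
  "mat_of_cart (Lmat a) * ideal_basis
     = ideal_basis * four_block_mat (left_block a) (0\<^sub>m 4 4) (0\<^sub>m 4 4) (left_block a)"
  by (rule eq_mat_8I)
     (simp_all add: forall_less_8 index_mult_mat_8 index_mat_of_cart_Lmat blade_sign_table
        ideal_basis_def left_block_def complex_block_def numeral_3_eq_3 [symmetric]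
        del: index_mult_mat(1))

lemma det_Lmat: "det (Lmat a) = (Pf a)\<^sup>2"
proof -
  let ?L = "mat_of_cart (Lmat a)"
  let ?B = "four_block_mat (left_block a) (0\<^sub>m 4 4) (0\<^sub>m 4 4) (left_block a)"
  have B: "?B \<in> carrier_mat 8 8"
    using four_block_carrier_mat[OF left_block_carrier left_block_carrier] by simp
  have "Determinant.det ?L * Determinant.det ideal_basis = Determinant.det (?L * ideal_basis)"
    by (rule det_mult[OF mat_of_cart_carrier ideal_basis_carrier, symmetric])
  also have "\<dots> = Determinant.det (ideal_basis * ?B)"
    by (simp only: mat_of_cart_Lmat_ideal_basis)
  also have "\<dots> = Determinant.det ideal_basis * Determinant.det ?B"
    by (rule det_mult[OF ideal_basis_carrier B])
  finally have "Determinant.det ?L = Determinant.det ?B"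
    using det_ideal_basis_nonzero by simp
  also have "\<dots> = Determinant.det (left_block a) * Determinant.det (left_block a)"
    by (rule det_four_block_mat_upper_right_zero[OF left_block_carrier refl _ left_block_carrier]) simp
  finally show ?thesis
    by (simp add: det_mat_of_cart det_left_block power2_eq_square)
qed

lemma mat_of_cart_Rmat:
  "mat_of_cart (Rmat a)
     = mat_diag 8 reversion_sign * mat_of_cart (Lmat (reversion a)) * mat_diag 8 reversion_sign"
  (is "_ = ?D * ?L * ?D")
proof -
  have "?D * ?L * ?D = Matrix.mat 8 8 (\<lambda>(i, j). reversion_sign i * ?L $$ (i, j) * reversion_sign j)"
    by (rule eq_matI)
       (simp_all add: mat_diag_mult_left[OF mat_of_cart_carrier] mat_diag_mult_right[of _ 8 8])
  also have "\<dots> = mat_of_cart (Rmat a)"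
  proof (rule eq_matI)
    fix i j assume "i < dim_row (mat_of_cart (Rmat a))" "j < dim_col (mat_of_cart (Rmat a))"
    then have i: "i < 8" and j: "j < 8" by simp_all
    define k where "k = xor i j"
    have k: "k < 8" unfolding k_def using i j by (rule xor_less_8)
    have "xor j k = i"
      unfolding k_def by (metis xor.left_commute xor_self_eq xor.right_neutral)
    then have "reversion_sign i * blade_sign j k = reversion_sign j * reversion_sign k * blade_sign k j"
      using blade_sign_reversion[OF j k] by simp
    then have "blade_sign j k = reversion_sign i * reversion_sign j * reversion_sign k * blade_sign k j"
      by (metis mult.assoc mult_1 reversion_sign_square[OF i])
    then show "Matrix.mat 8 8 (\<lambda>(i, j). reversion_sign i * ?L $$ (i, j) * reversion_sign j) $$ (i, j)
        = mat_of_cart (Rmat a) $$ (i, j)"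
      using i j k
      by (simp add: index_mat_of_cart_Lmat index_mat_of_cart_Rmat coord_reversion k_def[symmetric]
          algebra_simps)
  qed simp_all
  finally show ?thesis ..
qed

lemma det_Rmat: "det (Rmat a) = det (Lmat (reversion a))"
proof -
  let ?D = "mat_diag 8 reversion_sign" and ?L = "mat_of_cart (Lmat (reversion a))"
  have "?D * ?D = 1\<^sub>m 8"
    unfolding mat_diag_diag by (rule eq_matI) (simp_all add: mat_diag_def reversion_sign_square)
  then have "Determinant.det ?D * Determinant.det ?D = 1"
    using det_mult[of ?D 8 ?D] by simp
  moreover have "Determinant.det (?D * ?L * ?D) = Determinant.det ?D * Determinant.det ?L * Determinant.det ?D"
    using det_mult[of "?D * ?L" 8 ?D] det_mult[of ?D 8 ?L] by simp
  ultimately show ?thesis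
    by (simp add: det_mat_of_cart mat_of_cart_Rmat algebra_simps)
qed

theorem proposition2p4:
  fixes a :: cl12
  shows "det (Lmat a) = det (Rmat a) \<and> det (Rmat a) = ((Nf a)^2 + 4 * (Tf a)^2)^2
         \<and> ((Nf a)^2 + 4 * (Tf a)^2)^2 = (Pf a)^2"
  using det_Lmat[of a] det_Lmat[of "reversion a"] det_Rmat[of a] Pf_reversion[of a]
  by (simp add: Pf_def)

end
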